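(* If $(s_1,s_2,p)\in\Gamma_3$ (respectively $\mathbb G_3$), then $\left(\tfrac{s_1}{3}+\omega\tfrac{s_2}{3},\,\omega p\right)\in\Gamma_2$ (respectively $\mathbb G_2$) for every $\omega\in\mathbb T$.
   Context: $\mathbb G_2=\{(z_1+z_2,z_1z_2):|z_1|,|z_2|<1\}$, $\Gamma_2$ the same with $\le1$; $\mathbb G_3=\{(z_1+z_2+z_3,z_1z_2+z_2z_3+z_3z_1,z_1z_2z_3):|z_i|<1\}$, $\Gamma_3$ the same with $|z_i|\le1$. *)

theory Defs
  imports "HOL-Analysis.Analysis"
begin

definition G2 :: "(complex \<times> complex) set" where
  "G2 = {(z1 + z2, z1 * z2) | z1 z2. norm z1 < 1 \<and> norm z2 < 1}"

definition Gamma2 :: "(complex \<times> complex) set" where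
  "Gamma2 = {(z1 + z2, z1 * z2) | z1 z2. norm z1 \<le> 1 \<and> norm z2 \<le> 1}"

definition G3 :: "(complex \<times> complex \<times> complex) set" where
  "G3 = {(z1 + z2 + z3, z1 * z2 + z2 * z3 + z3 * z1, z1 * z2 * z3) | z1 z2 z3.
           norm z1 < 1 \<and> norm z2 < 1 \<and> norm z3 < 1}"

definition Gamma3 :: "(complex \<times> complex \<times> complex) set" where
  "Gamma3 = {(z1 + z2 + z3, z1 * z2 + z2 * z3 + z3 * z1, z1 * z2 * z3) | z1 z2 z3.
           norm z1 \<le> 1 \<and> norm z2 \<le> 1 \<and> norm z3 \<le> 1}"

end

(* Classically, (S, P) \<in> Gamma2 iff |S| \<le> 2, |P| \<le> 1 and |S - cnj S P| \<le> 1 - |P|^2 (for G2: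
   |P| < 1 and the last inequality strict). As S \<mapsto> S - cnj S P is real-linear, every fibre
   {S. (S, P) \<in> Gamma2} over a fixed P is convex, and likewise for G2. Now if (s1, s2, p) comes
   from z1, z2, z3, then (s1/3 + \<omega> s2/3, \<omega> p) is the barycentre of the three points
   (z_i + \<omega> z_j z_k, \<omega> p) = (u + v, u v) with u = z_i, v = \<omega> z_j z_k, which lie in Gamma2
   (resp. G2) and over the same P = \<omega> p. *)

theory Submission
  imports Defs
begin

lemma sum_minus_cnj_sum_mult_prod:
  fixes u v :: complex
  shows "(u + v) - cnj (u + v) * (u * v) =
         u * of_real (1 - (norm v)\<^sup>2) + v * of_real (1 - (norm u)\<^sup>2)"
proof -
  have "(u + v) - cnj (u + v) * (u * v) = u + v - (u * cnj u) * v - (v * cnj v) * u"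
    by (simp add: algebra_simps)
  also have "\<dots> = u * of_real (1 - (norm v)\<^sup>2) + v * of_real (1 - (norm u)\<^sup>2)"
    unfolding complex_norm_square[symmetric] by (simp add: algebra_simps)
  finally show ?thesis .
qed

lemma norm_sum_minus_cnj_sum_mult_prod_le:
  fixes u v :: complex
  assumes "norm u \<le> 1" "norm v \<le> 1"
  shows "norm ((u + v) - cnj (u + v) * (u * v)) \<le>
         (norm u + norm v) * (1 - norm u * norm v)"
proof -
  have "(norm u)\<^sup>2 \<le> 1" "(norm v)\<^sup>2 \<le> 1"
    using assms by (simp_all add: power_le_one)
  then have "norm (u * of_real (1 - (norm v)\<^sup>2) + v * of_real (1 - (norm u)\<^sup>2))
             \<le> norm u * (1 - (norm v)\<^sup>2) + norm v * (1 - (norm u)\<^sup>2)"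
    by (smt (verit) norm_mult norm_of_real norm_triangle_ineq)
  also have "\<dots> = (norm u + norm v) * (1 - norm u * norm v)"
    by (simp add: algebra_simps power2_eq_square)
  finally show ?thesis
    unfolding sum_minus_cnj_sum_mult_prod .
qed

lemma norm_sum_minus_cnj_sum_mult_prod_ge:
  fixes u v :: complex
  assumes "1 \<le> norm u"
  shows "(norm u + norm v) * (1 - norm u * norm v) \<le>
         norm ((u + v) - cnj (u + v) * (u * v))"
proof -
  have "(norm u + norm v) * (1 - norm u * norm v)
        = norm u * (1 - (norm v)\<^sup>2) - norm v * ((norm u)\<^sup>2 - 1)"
    by (simp add: algebra_simps power2_eq_square)
  also have "\<dots> \<le> norm (u * of_real (1 - (norm v)\<^sup>2)) - norm (v * of_real (1 - (norm u)\<^sup>2))"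
    unfolding norm_mult norm_of_real
    using assms by (simp add: mult_left_mono one_le_power)
  also have "\<dots> \<le> norm (u * of_real (1 - (norm v)\<^sup>2) + v * of_real (1 - (norm u)\<^sup>2))"
    by (rule norm_diff_ineq)
  finally show ?thesis
    unfolding sum_minus_cnj_sum_mult_prod .
qed

lemma norm_sum_gt_2_if_defect_eq_0:
  fixes u v :: complex
  assumes u: "1 < norm u" and uv: "norm u * norm v = 1"
    and defect: "(u + v) - cnj (u + v) * (u * v) = 0"
  shows "2 < norm (u + v)"
proof -
  define a b where "a = norm u" and "b = norm v"
  have a: "1 < a" and ab1: "a * b = 1" using u uv by (simp_all add: a_def b_def)
  have "b < 1"
    using a ab1 mult_left_mono[of 1 b a] by fastforce
  then have "b\<^sup>2 < a\<^sup>2"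
    using a power_strict_mono[of b a 2] by (simp add: b_def)
  then have "0 < a\<^sup>2 - 1" "0 < a\<^sup>2 - b\<^sup>2"
    using a by (simp_all add: one_less_power)
  \<comment> \<open>The vanishing defect makes v a positive real multiple of u, so |u + v| = a + 1/a.\<close>
  have "u * of_real (1 - b\<^sup>2) = v * of_real (a\<^sup>2 - 1)"
    using defect unfolding sum_minus_cnj_sum_mult_prod a_def b_def
    by (simp add: algebra_simps)
  then have "(u + v) * of_real (a\<^sup>2 - 1) = u * (of_real (a\<^sup>2 - 1) + of_real (1 - b\<^sup>2))"
    by (simp only: distrib_left distrib_right)
  then have "(u + v) * of_real (a\<^sup>2 - 1) = u * of_real (a\<^sup>2 - b\<^sup>2)"
    by (simp only: of_real_add[symmetric]) simp
  then have "norm (u + v) * \<bar>a\<^sup>2 - 1\<bar> = a * \<bar>a\<^sup>2 - b\<^sup>2\<bar>"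
    by (metis norm_mult norm_of_real a_def)
  with \<open>0 < a\<^sup>2 - 1\<close> \<open>0 < a\<^sup>2 - b\<^sup>2\<close>
  have "norm (u + v) * (a\<^sup>2 - 1) = a * (a\<^sup>2 - b\<^sup>2)"
    by simp
  moreover have "2 * (a\<^sup>2 - 1) < a * (a\<^sup>2 - b\<^sup>2)"
  proof -
    have "a * (a * (a\<^sup>2 - b\<^sup>2)) - a * (2 * (a\<^sup>2 - 1)) = (a - 1) ^ 3 * (a + 1)"
      using ab1 by algebra
    moreover have "0 < (a - 1) ^ 3 * (a + 1)" using a by simp
    ultimately have "a * (2 * (a\<^sup>2 - 1)) < a * (a * (a\<^sup>2 - b\<^sup>2))" by linarith
    moreover have "0 < a" using a by linarith
    ultimately show ?thesis by (metis mult_less_cancel_left_pos)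
  qed
  ultimately show ?thesis
    using \<open>0 < a\<^sup>2 - 1\<close> by (metis mult_less_cancel_right_pos)
qed

lemma norm_le_1_if_Gamma2_conditions:
  fixes u v :: complex
  assumes prod: "norm (u * v) \<le> 1" and sum: "norm (u + v) \<le> 2"
    and defect: "norm ((u + v) - cnj (u + v) * (u * v)) \<le> 1 - (norm (u * v))\<^sup>2"
  shows "norm u \<le> 1"
proof (rule ccontr)
  define a b where "a = norm u" and "b = norm v"
  assume "\<not> norm u \<le> 1"
  then have a: "1 < a" by (simp add: a_def)
  have ab: "a * b \<le> 1" using prod by (simp add: a_def b_def norm_mult)
  have b: "b < 1"
    using a ab mult_left_mono[of 1 b a] by fastforce
  show False
  proof (cases "a * b < 1")
    case True
    have "(a + b) * (1 - a * b) \<le> (1 + a * b) * (1 - a * b)"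
      using norm_sum_minus_cnj_sum_mult_prod_ge[of u v] defect a
      by (simp add: a_def b_def norm_mult power2_eq_square algebra_simps)
    then have "a + b \<le> 1 + a * b" using True by simp
    moreover have "0 < (a - 1) * (1 - b)" using a b by simp
    ultimately show False by (simp add: algebra_simps)
  next
    case False
    with ab have ab1: "a * b = 1" by simp
    then have "1 - (norm (u * v))\<^sup>2 = 0"
      by (simp add: a_def b_def norm_mult)
    then have "norm ((u + v) - cnj (u + v) * (u * v)) \<le> 0"
      using defect by linarith
    then have "(u + v) - cnj (u + v) * (u * v) = 0"
      by (simp only: norm_le_zero_iff)
    then have "2 < norm (u + v)"
      using norm_sum_gt_2_if_defect_eq_0[of u v] a ab1 unfolding a_def b_def by blast
    with sum show False by simp
  qed
qed

lemma norm_less_1_if_G2_conditions: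
  fixes u v :: complex
  assumes prod: "norm (u * v) < 1"
    and defect: "norm ((u + v) - cnj (u + v) * (u * v)) < 1 - (norm (u * v))\<^sup>2"
  shows "norm u < 1"
proof (rule ccontr)
  define a b where "a = norm u" and "b = norm v"
  assume "\<not> norm u < 1"
  then have a: "1 \<le> a" by (simp add: a_def)
  have ab: "a * b < 1" using prod by (simp add: a_def b_def norm_mult)
  have b: "b < 1"
    using a ab mult_left_mono[of 1 b a] by fastforce
  have "(a + b) * (1 - a * b) < (1 + a * b) * (1 - a * b)"
    using norm_sum_minus_cnj_sum_mult_prod_ge[of u v] defect a
    by (simp add: a_def b_def norm_mult power2_eq_square algebra_simps)
  then have "a + b < 1 + a * b" using ab by simp
  moreover have "0 \<le> (a - 1) * (1 - b)" using a b by simp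
  ultimately show False by (simp add: algebra_simps)
qed

lemma norm_mult_less_1:
  fixes a b :: "'a :: real_normed_div_algebra"
  assumes "norm a < 1" "norm b < 1"
  shows "norm (a * b) < 1"
  using assms by (simp add: norm_mult)
    (metis mult_left_le_one_le norm_ge_zero less_imp_le le_less_trans)

lemma ex_sum_prod_eq:
  fixes S P :: complex
  obtains u v where "S = u + v" "P = u * v"
proof
  define d where "d = csqrt (S\<^sup>2 - 4 * P)"
  show "S = (S + d) / 2 + (S - d) / 2" by (simp add: field_simps)
  have "d\<^sup>2 = S\<^sup>2 - 4 * P" by (simp add: d_def)
  then show "P = (S + d) / 2 * ((S - d) / 2)"
    by (simp add: field_simps power2_eq_square)
qed

lemma Gamma2_iff:
  "(S, P) \<in> Gamma2 \<longleftrightarrow>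
     norm S \<le> 2 \<and> norm P \<le> 1 \<and> norm (S - cnj S * P) \<le> 1 - (norm P)\<^sup>2"
proof
  assume "(S, P) \<in> Gamma2"
  then obtain u v where SP: "S = u + v" "P = u * v" and uv: "norm u \<le> 1" "norm v \<le> 1"
    unfolding Gamma2_def by blast
  have "norm S \<le> 2" using uv norm_triangle_ineq[of u v] unfolding SP by simp
  moreover have "norm P \<le> 1" using uv unfolding SP by (simp add: norm_mult mult_le_one)
  moreover have "(norm u + norm v) * (1 - norm u * norm v) \<le> 1 - (norm u * norm v)\<^sup>2"
  proof -
    have "0 \<le> (1 - norm u) * (1 - norm v) * (1 - norm u * norm v)"
      using uv by (simp add: mult_le_one)
    then show ?thesis by (simp add: algebra_simps power2_eq_square)
  qed
  ultimately show "norm S \<le> 2 \<and> norm P \<le> 1 \<and> norm (S - cnj S * P) \<le> 1 - (norm P)\<^sup>2"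
    using norm_sum_minus_cnj_sum_mult_prod_le[OF uv] unfolding SP by (simp add: norm_mult)
next
  assume "norm S \<le> 2 \<and> norm P \<le> 1 \<and> norm (S - cnj S * P) \<le> 1 - (norm P)\<^sup>2"
  moreover obtain u v where SP: "S = u + v" "P = u * v" by (rule ex_sum_prod_eq)
  ultimately have "norm u \<le> 1" "norm v \<le> 1"
    using norm_le_1_if_Gamma2_conditions[of u v] norm_le_1_if_Gamma2_conditions[of v u]
    by (simp_all add: add.commute mult.commute)
  then show "(S, P) \<in> Gamma2" unfolding Gamma2_def SP by blast
qed

lemma G2_iff:
  "(S, P) \<in> G2 \<longleftrightarrow> norm P < 1 \<and> norm (S - cnj S * P) < 1 - (norm P)\<^sup>2"
proof
  assume "(S, P) \<in> G2"
  then obtain u v where SP: "S = u + v" "P = u * v" and uv: "norm u < 1" "norm v < 1"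
    unfolding G2_def by blast
  have uv1: "norm u * norm v < 1"
    using norm_mult_less_1[OF uv] by (simp add: norm_mult)
  then have "norm P < 1" unfolding SP by (simp add: norm_mult)
  moreover have "(norm u + norm v) * (1 - norm u * norm v) < 1 - (norm u * norm v)\<^sup>2"
  proof -
    have "0 < (1 - norm u) * (1 - norm v) * (1 - norm u * norm v)"
      using uv uv1 by simp
    then show ?thesis by (simp add: algebra_simps power2_eq_square)
  qed
  ultimately show "norm P < 1 \<and> norm (S - cnj S * P) < 1 - (norm P)\<^sup>2"
    using norm_sum_minus_cnj_sum_mult_prod_le[of u v] uv unfolding SP by (simp add: norm_mult)
next
  assume "norm P < 1 \<and> norm (S - cnj S * P) < 1 - (norm P)\<^sup>2"
  moreover obtain u v where SP: "S = u + v" "P = u * v" by (rule ex_sum_prod_eq)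
  ultimately have "norm u < 1" "norm v < 1"
    using norm_less_1_if_G2_conditions[of u v] norm_less_1_if_G2_conditions[of v u]
    by (simp_all add: add.commute mult.commute)
  then show "(S, P) \<in> G2" unfolding G2_def SP by blast
qed

lemma linear_minus_cnj_mult: "linear (\<lambda>S. S - cnj S * P)"
  by (rule linearI) (simp_all add: scaleR_conv_of_real algebra_simps)

lemma convex_Gamma2_fibre: "convex {S. (S, P) \<in> Gamma2}"
proof (cases "norm P \<le> 1")
  case True
  then have "{S. (S, P) \<in> Gamma2} =
             cball 0 2 \<inter> (\<lambda>S. S - cnj S * P) -` cball 0 (1 - (norm P)\<^sup>2)"
    by (auto simp: Gamma2_iff)
  then show ?thesis
    by (simp add: convex_Int convex_linear_vimage linear_minus_cnj_mult)
next
  case False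
  then show ?thesis by (simp add: Gamma2_iff)
qed

lemma convex_G2_fibre: "convex {S. (S, P) \<in> G2}"
proof (cases "norm P < 1")
  case True
  then have "{S. (S, P) \<in> G2} = (\<lambda>S. S - cnj S * P) -` ball 0 (1 - (norm P)\<^sup>2)"
    by (auto simp: G2_iff)
  then show ?thesis
    by (simp add: convex_linear_vimage linear_minus_cnj_mult)
next
  case False
  then show ?thesis by (simp add: G2_iff)
qed

lemma convex_mean3:
  assumes "convex A" "x \<in> A" "y \<in> A" "z \<in> A"
  shows "(1/3) *\<^sub>R (x + y + z) \<in> A"
proof -
  have "(1/2) *\<^sub>R x + (1/2) *\<^sub>R y \<in> A"
    using assms by (intro convexD) auto
  then have "(2/3) *\<^sub>R ((1/2) *\<^sub>R x + (1/2) *\<^sub>R y) + (1/3) *\<^sub>R z \<in> A"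
    using assms by (intro convexD) auto
  then show ?thesis by (simp add: scaleR_add_right)
qed

lemma barycentre_in_convex_fibre:
  fixes X :: "(complex \<times> complex) set" and z1 z2 z3 \<omega> :: complex
  defines "P \<equiv> \<omega> * (z1 * z2 * z3)"
  assumes "convex {S. (S, P) \<in> X}"
    and "(z1 + \<omega> * (z2 * z3), z1 * (\<omega> * (z2 * z3))) \<in> X"
    and "(z2 + \<omega> * (z3 * z1), z2 * (\<omega> * (z3 * z1))) \<in> X"
    and "(z3 + \<omega> * (z1 * z2), z3 * (\<omega> * (z1 * z2))) \<in> X"
  shows "((z1 + z2 + z3) / 3 + \<omega> * (z1 * z2 + z2 * z3 + z3 * z1) / 3, P) \<in> X"
proof -
  have "(z1 + z2 + z3) / 3 + \<omega> * (z1 * z2 + z2 * z3 + z3 * z1) / 3 =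
        (1/3) *\<^sub>R ((z1 + \<omega> * (z2 * z3)) + (z2 + \<omega> * (z3 * z1)) + (z3 + \<omega> * (z1 * z2)))"
    by (simp add: scaleR_conv_of_real field_simps)
  also have "\<dots> \<in> {S. (S, P) \<in> X}"
    using assms by (intro convex_mean3) (simp_all add: P_def mult_ac)
  finally show ?thesis by simp
qed

theorem mainTheorem15:
  fixes s1 s2 p \<omega> :: complex
  assumes "norm \<omega> = 1"
  shows "((s1, s2, p) \<in> Gamma3 \<longrightarrow> (s1 / 3 + \<omega> * s2 / 3, \<omega> * p) \<in> Gamma2)
       \<and> ((s1, s2, p) \<in> G3 \<longrightarrow> (s1 / 3 + \<omega> * s2 / 3, \<omega> * p) \<in> G2)"
proof (intro conjI impI)
  assume "(s1, s2, p) \<in> Gamma3"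
  then obtain z1 z2 z3 where s: "s1 = z1 + z2 + z3" "s2 = z1 * z2 + z2 * z3 + z3 * z1"
      "p = z1 * z2 * z3" and z: "norm z1 \<le> 1" "norm z2 \<le> 1" "norm z3 \<le> 1"
    unfolding Gamma3_def by blast
  have pair: "(u + \<omega> * (a * b), u * (\<omega> * (a * b))) \<in> Gamma2"
    if "norm u \<le> 1" "norm a \<le> 1" "norm b \<le> 1" for u a b
  proof -
    have "norm (\<omega> * (a * b)) \<le> 1" using that assms by (simp add: norm_mult mult_le_one)
    with that show ?thesis unfolding Gamma2_def by blast
  qed
  show "(s1 / 3 + \<omega> * s2 / 3, \<omega> * p) \<in> Gamma2"
    unfolding s by (intro barycentre_in_convex_fibre convex_Gamma2_fibre pair z)
next
  assume "(s1, s2, p) \<in> G3"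
  then obtain z1 z2 z3 where s: "s1 = z1 + z2 + z3" "s2 = z1 * z2 + z2 * z3 + z3 * z1"
      "p = z1 * z2 * z3" and z: "norm z1 < 1" "norm z2 < 1" "norm z3 < 1"
    unfolding G3_def by blast
  have pair: "(u + \<omega> * (a * b), u * (\<omega> * (a * b))) \<in> G2"
    if "norm u < 1" "norm a < 1" "norm b < 1" for u a b
  proof -
    have "norm (\<omega> * (a * b)) < 1" using norm_mult_less_1[OF that(2,3)] assms by (simp add: norm_mult)
    with that show ?thesis unfolding G2_def by blast
  qed
  show "(s1 / 3 + \<omega> * s2 / 3, \<omega> * p) \<in> G2"
    unfolding s by (intro barycentre_in_convex_fibre convex_G2_fibre pair z)
qed

end
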